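(* Let $f\colon\prod_{i\in[n]}X_i\to Y$ satisfy condition (BC) and $\Phi_k^-\le\Phi_k^+$ for all $k\in[n]$, and let $\varphi_k\colon X_k\to Y$ ($k\in[n]$) be maps satisfying the boundary condition with $\Phi_k^-\le\varphi_k\le\Phi_k^+$ for all $k$. Put $a_k=\varphi_k(0_{X_k})$, $b_k=\varphi_k(1_{X_k})$, and for $I\subseteq[n]$ let $\mathbf{e}_I\in Y^n$ have $i$-th component $b_i$ if $i\in I$ and $a_i$ if $i\notin I$. Then a polynomial function $p\colon Y^n\to Y$ satisfies $f(\mathbf{x})=p(\varphi_1(x_1),\ldots,\varphi_n(x_n))$ for all $\mathbf{x}$ if and only if $p(\mathbf{e}_I)=f(\widehat{\mathbf{1}}_I)$ for all $I\subseteq[n]$.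
   Context: $Y$ is a finite distributive lattice identified with a sublattice of $\mathcal{P}(U)$ for a finite set $U$, with least element $0=\emptyset$, greatest element $1=U$, and $\wedge,\vee$ being intersection and union; $\overline{S}=U\setminus S$. For $S\subseteq U$, $\operatorname{cl}(S)=\bigwedge\{y\in Y: y\ge S\}$, $\operatorname{int}(S)=\bigvee\{y\in Y: y\le S\}$. $[n]=\{1,\ldots,n\}$; $X_1,\ldots,X_n$ are arbitrary sets with at least two elements, each with two fixed distinct elements $0_{X_k},1_{X_k}$ (written $0,1$). For $\mathbf{x}\in\prod_i X_i$ and $a\in X_k$, $\mathbf{x}_k^a$ is $\mathbf{x}$ with $k$-th component replaced by $a$. For $I\subseteq[n]$, $\widehat{\mathbf{1}}_I$ is the tuple whose $i$-th component is $1_{X_i}$ if $i\in I$ and $0_{X_i}$ otherwise. A map $\varphi_k\colon X_k\to Y$ satisfies the boundary condition if $\varphi_k(0_{X_k})\le\varphi_k(x_k)\le\varphi_k(1_{X_k})$ for all $x_k$. A polynomial function $Y^n\to Y$ is a composition of $\wedge,\vee$ with variables and constants. Condition (BC): $f(\mathbf{x}_k^0)\le f(\mathbf{x})\le f(\mathbf{x}_k^1)$ for all $k$ and $\mathbf{x}$. For $k\in[n]$, $a_k\in X_k$: $$\Phi_k^-(a_k)=\bigvee_{\mathbf{x}:\,x_k=a_k}\operatorname{cl}\big(f(\mathbf{x})\wedge\overline{f(\mathbf{x}_k^0)}\big),\qquad \Phi_k^+(a_k)=\bigwedge_{\mathbf{x}:\,x_k=a_k}\operatorname{int}\big(f(\mathbf{x})\vee\overline{f(\mathbf{x}_k^1)}\big),$$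 ranging over all $\mathbf{x}$ with $k$-th component $a_k$. *)

theory Defs
  imports "HOL-Library.FuncSet"
begin

definition set_lattice :: "'u set \<Rightarrow> 'u set set \<Rightarrow> bool" where
  "set_lattice U Y \<longleftrightarrow> finite U \<and> Y \<subseteq> Pow U \<and> {} \<in> Y \<and> U \<in> Y \<and>
     (\<forall>y\<in>Y. \<forall>z\<in>Y. y \<inter> z \<in> Y \<and> y \<union> z \<in> Y)"

definition cl :: "'u set \<Rightarrow> 'u set set \<Rightarrow> 'u set \<Rightarrow> 'u set" where
  "cl U Y S = U \<inter> \<Inter>{y\<in>Y. S \<subseteq> y}"

definition intr :: "'u set set \<Rightarrow> 'u set \<Rightarrow> 'u set" where
  "intr Y S = \<Union>{y\<in>Y. y \<subseteq> S}"

abbreviation tuples :: "nat \<Rightarrow> (nat \<Rightarrow> 'x set) \<Rightarrow> (nat \<Rightarrow> 'x) set" where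
  "tuples n X \<equiv> PiE {1..n} X"

definition Phi_minus ::
  "'u set \<Rightarrow> 'u set set \<Rightarrow> nat \<Rightarrow> (nat \<Rightarrow> 'x set) \<Rightarrow> (nat \<Rightarrow> 'x) \<Rightarrow> ((nat \<Rightarrow> 'x) \<Rightarrow> 'u set)
    \<Rightarrow> nat \<Rightarrow> 'x \<Rightarrow> 'u set" where
  "Phi_minus U Y n X zero f k a =
     \<Union>{cl U Y (f x \<inter> (U - f (x(k := zero k)))) | x. x \<in> tuples n X \<and> x k = a}"

definition Phi_plus ::
  "'u set \<Rightarrow> 'u set set \<Rightarrow> nat \<Rightarrow> (nat \<Rightarrow> 'x set) \<Rightarrow> (nat \<Rightarrow> 'x) \<Rightarrow> ((nat \<Rightarrow> 'x) \<Rightarrow> 'u set)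
    \<Rightarrow> nat \<Rightarrow> 'x \<Rightarrow> 'u set" where
  "Phi_plus U Y n X one f k a =
     U \<inter> \<Inter>{intr Y (f x \<union> (U - f (x(k := one k)))) | x. x \<in> tuples n X \<and> x k = a}"

datatype 'u lterm = Var nat | Const "'u set" | Meet "'u lterm" "'u lterm" | Join "'u lterm" "'u lterm"

fun leval :: "'u lterm \<Rightarrow> (nat \<Rightarrow> 'u set) \<Rightarrow> 'u set" where
  "leval (Var i) y = y i"
| "leval (Const c) y = c"
| "leval (Meet s t) y = leval s y \<inter> leval t y"
| "leval (Join s t) y = leval s y \<union> leval t y"

fun lvars :: "'u lterm \<Rightarrow> nat set" where
  "lvars (Var i) = {i}"
| "lvars (Const c) = {}"
| "lvars (Meet s t) = lvars s \<union> lvars t"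
| "lvars (Join s t) = lvars s \<union> lvars t"

fun lconsts :: "'u lterm \<Rightarrow> 'u set set" where
  "lconsts (Var i) = {}"
| "lconsts (Const c) = {c}"
| "lconsts (Meet s t) = lconsts s \<union> lconsts t"
| "lconsts (Join s t) = lconsts s \<union> lconsts t"

definition polyfun :: "'u set set \<Rightarrow> nat \<Rightarrow> ((nat \<Rightarrow> 'u set) \<Rightarrow> 'u set) \<Rightarrow> bool" where
  "polyfun Y n p \<longleftrightarrow> (\<exists>t. lvars t \<subseteq> {1..n} \<and> lconsts t \<subseteq> Y \<and>
      (\<forall>y\<in>PiE {1..n} (\<lambda>_. Y). p y = leval t y))"

definition hat1 :: "nat \<Rightarrow> (nat \<Rightarrow> 'x) \<Rightarrow> (nat \<Rightarrow> 'x) \<Rightarrow> nat set \<Rightarrow> (nat \<Rightarrow> 'x)" where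
  "hat1 n zero one I = (\<lambda>i\<in>{1..n}. if i \<in> I then one i else zero i)"

end

theory Submission
  imports Defs
begin

(* Both sides of the claimed identity f(x) = p(phi_1(x_1),...,phi_n(x_n))
   obey the same "median" recursion in every coordinate k:
       g(x) = g(x_k^0)  \<union>  (phi_k(x_k) \<inter> g(x_k^1)).
   For the polynomial side this is the median decomposition of lattice terms in a
   distributive lattice (a term is monotone in each variable, and its value at y is
   determined by its values at the two bounds of y_k); for f it follows from condition
   (BC) together with the bounds Phi_k^- <= phi_k <= Phi_k^+.
   A function obeying such a recursion is determined by its values at the Boolean
   points hat1 I: induct on the number of coordinates of x that are neither 0 nor 1.
   Hence the identity holds everywhere iff it holds at the Boolean points, where the
   right-hand side is exactly p(e_I). *)

lemma leval_mono_upd: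
  assumes "a \<subseteq> b"
  shows "leval t (y(k := a)) \<subseteq> leval t (y(k := b))"
  using assms by (induction t) auto

text \<open>Distributivity of \<open>\<inter>,\<union>\<close> drives the
  \<open>Join\<close> case, monotonicity the \<open>Meet\<close> case.\<close>
lemma leval_median:
  assumes "a \<subseteq> y k" "y k \<subseteq> b"
  shows "leval t y = leval t (y(k := a)) \<union> (y k \<inter> leval t (y(k := b)))"
proof (induction t)
  case (Var i)
  show ?case using assms by auto
next
  case (Const c)
  show ?case by simp
next
  case (Meet s t)
  have "a \<subseteq> b" using assms by blast
  then have "leval s (y(k := a)) \<subseteq> leval s (y(k := b))"
    and "leval t (y(k := a)) \<subseteq> leval t (y(k := b))"
    by (simp_all add: leval_mono_upd)
  then show ?case unfolding leval.simps Meet.IH by blast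
next
  case (Join s t)
  show ?case unfolding leval.simps Join.IH by blast
qed

lemma polyfun_median:
  assumes p: "polyfun Y n p"
    and y: "y \<in> PiE {1..n} (\<lambda>_. Y)" and k: "k \<in> {1..n}"
    and ab: "a \<in> Y" "b \<in> Y" "a \<subseteq> y k" "y k \<subseteq> b"
  shows "p y = p (y(k := a)) \<union> (y k \<inter> p (y(k := b)))"
proof -
  obtain t where t: "\<forall>z\<in>PiE {1..n} (\<lambda>_. Y). p z = leval t z"
    using p unfolding polyfun_def by auto
  have "y(k := c) \<in> PiE {1..n} (\<lambda>_. Y)" if "c \<in> Y" for c
    using y k that by (auto simp: PiE_iff extensional_def)
  then have "p (y(k := a)) = leval t (y(k := a))" and "p (y(k := b)) = leval t (y(k := b))"
    using t ab(1,2) by blast+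
  moreover have "p y = leval t y" using t y by blast
  ultimately show ?thesis using leval_median[where y = y and k = k, OF ab(3,4)] by (simp only:)
qed

lemma polyfun_comp_median:
  fixes \<phi> :: "nat \<Rightarrow> 'x \<Rightarrow> 'u set" and n :: nat
  defines "F \<equiv> \<lambda>x. \<lambda>i\<in>{1..n}. \<phi> i (x i)"
  assumes p: "polyfun Y n p" and x: "x \<in> tuples n X" and k: "k \<in> {1..n}"
    and bounds: "zero k \<in> X k" "one k \<in> X k"
    and phi_into: "\<forall>i\<in>{1..n}. \<forall>a\<in>X i. \<phi> i a \<in> Y"
    and phi_bd: "\<forall>a\<in>X k. \<phi> k (zero k) \<subseteq> \<phi> k a \<and> \<phi> k a \<subseteq> \<phi> k (one k)"
  shows "p (F x) = p (F (x(k := zero k))) \<union> (\<phi> k (x k) \<inter> p (F (x(k := one k))))"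
proof -
  have F_upd: "F (x(k := c)) = (F x)(k := \<phi> k c)" for c unfolding F_def using k by (intro ext) auto
  have F_k: "F x k = \<phi> k (x k)" using k unfolding F_def by simp
  have F_x: "F x \<in> PiE {1..n} (\<lambda>_. Y)" using x phi_into unfolding F_def by auto
  have "x k \<in> X k" using x k by auto
  then have "\<phi> k (zero k) \<in> Y" "\<phi> k (one k) \<in> Y"
    and "\<phi> k (zero k) \<subseteq> F x k" "F x k \<subseteq> \<phi> k (one k)"
    using phi_into phi_bd k bounds unfolding F_k by auto
  then have "p (F x) = p ((F x)(k := \<phi> k (zero k))) \<union> (F x k \<inter> p ((F x)(k := \<phi> k (one k))))"
    by (rule polyfun_median[OF p F_x k])
  then show ?thesis unfolding F_upd F_k .
qed

lemma Phi_minus_lower: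
  assumes "x \<in> tuples n X" and "f x \<subseteq> U"
  shows "f x \<inter> (U - f (x(k := zero k))) \<subseteq> Phi_minus U Y n X zero f k (x k)"
proof -
  have "f x \<inter> (U - f (x(k := zero k))) \<subseteq> cl U Y (f x \<inter> (U - f (x(k := zero k))))"
    using assms(2) unfolding cl_def by auto
  also have "\<dots> \<subseteq> Phi_minus U Y n X zero f k (x k)"
    unfolding Phi_minus_def using assms(1) by blast
  finally show ?thesis .
qed

lemma Phi_plus_upper:
  assumes "x \<in> tuples n X"
  shows "Phi_plus U Y n X one f k (x k) \<subseteq> f x \<union> (U - f (x(k := one k)))"
proof -
  have "Phi_plus U Y n X one f k (x k) \<subseteq> intr Y (f x \<union> (U - f (x(k := one k))))"
    unfolding Phi_plus_def using assms by blast
  also have "\<dots> \<subseteq> f x \<union> (U - f (x(k := one k)))"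
    unfolding intr_def by auto
  finally show ?thesis .
qed

lemma f_median:
  assumes x: "x \<in> tuples n X" and k: "k \<in> {1..n}" and one: "one k \<in> X k"
    and f_U: "\<forall>x\<in>tuples n X. f x \<subseteq> U"
    and bc: "f (x(k := zero k)) \<subseteq> f x" "f x \<subseteq> f (x(k := one k))"
    and lower: "Phi_minus U Y n X zero f k (x k) \<subseteq> s"
    and upper: "s \<subseteq> Phi_plus U Y n X one f k (x k)"
  shows "f x = f (x(k := zero k)) \<union> (s \<inter> f (x(k := one k)))"
proof -
  have "x(k := one k) \<in> tuples n X"
    using x k one by (auto simp: PiE_iff extensional_def)
  then have fU: "f x \<subseteq> U" "f (x(k := one k)) \<subseteq> U" using f_U x by auto
  have "f x \<inter> (U - f (x(k := zero k))) \<subseteq> Phi_minus U Y n X zero f k (x k)"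
    using x fU(1) by (rule Phi_minus_lower)
  then have "f x \<inter> (U - f (x(k := zero k))) \<subseteq> s" using lower by (rule order_trans)
  moreover have "s \<subseteq> f x \<union> (U - f (x(k := one k)))"
    using upper Phi_plus_upper[OF x] by (rule order_trans)
  ultimately show ?thesis using fU bc by blast
qed

definition inner_coords :: "nat \<Rightarrow> (nat \<Rightarrow> 'x) \<Rightarrow> (nat \<Rightarrow> 'x) \<Rightarrow> (nat \<Rightarrow> 'x) \<Rightarrow> nat set" where
  "inner_coords n zero one x = {i\<in>{1..n}. x i \<noteq> zero i \<and> x i \<noteq> one i}"

lemma no_inner_coords_hat1:
  assumes "x \<in> tuples n X" and "inner_coords n zero one x = {}"
  shows "x = hat1 n zero one {i\<in>{1..n}. x i = one i}"
proof
  fix i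
  show "x i = hat1 n zero one {i\<in>{1..n}. x i = one i} i"
    using assms unfolding inner_coords_def hat1_def
    by (cases "i \<in> {1..n}") (auto simp: PiE_iff extensional_def)
qed

lemma median_recursion_unique:
  fixes m :: "nat \<Rightarrow> 'x \<Rightarrow> 'a \<Rightarrow> 'a \<Rightarrow> 'a"
  assumes bounds: "\<forall>k\<in>{1..n}. zero k \<in> X k \<and> one k \<in> X k"
    and g: "\<And>x k. x \<in> tuples n X \<Longrightarrow> k \<in> {1..n} \<Longrightarrow>
              g x = m k (x k) (g (x(k := zero k))) (g (x(k := one k)))"
    and h: "\<And>x k. x \<in> tuples n X \<Longrightarrow> k \<in> {1..n} \<Longrightarrow>
              h x = m k (x k) (h (x(k := zero k))) (h (x(k := one k)))"
    and boolean: "\<And>I. I \<subseteq> {1..n} \<Longrightarrow> g (hat1 n zero one I) = h (hat1 n zero one I)"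
    and x: "x \<in> tuples n X"
  shows "g x = h x"
  using x
proof (induction "card (inner_coords n zero one x)" arbitrary: x rule: less_induct)
  case less
  show ?case
  proof (cases "inner_coords n zero one x = {}")
    case True
    then show ?thesis using no_inner_coords_hat1[OF less.prems] boolean
      by (metis (no_types, lifting) mem_Collect_eq subsetI)
  next
    case False
    then obtain k where kD: "k \<in> inner_coords n zero one x" by blast
    then have k: "k \<in> {1..n}" unfolding inner_coords_def by auto
    have fin: "finite (inner_coords n zero one x)" unfolding inner_coords_def by auto
    have smaller: "card (inner_coords n zero one (x(k := c))) < card (inner_coords n zero one x)"
      if "c = zero k \<or> c = one k" for c
    proof -
      have "inner_coords n zero one (x(k := c)) = inner_coords n zero one x - {k}"
        using that unfolding inner_coords_def by auto
      then show ?thesis using fin kD card_Diff1_less by metis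
    qed
    have "x(k := zero k) \<in> tuples n X" "x(k := one k) \<in> tuples n X"
      using less.prems k bounds by (auto simp: PiE_iff extensional_def)
    then have "g (x(k := zero k)) = h (x(k := zero k))" "g (x(k := one k)) = h (x(k := one k))"
      using less.hyps smaller by blast+
    then show ?thesis using g[OF less.prems k] h[OF less.prems k] by simp
  qed
qed

theorem mainTheorem8:
  fixes U :: "'u set" and Y :: "'u set set" and n :: nat
    and X :: "nat \<Rightarrow> 'x set" and zero one :: "nat \<Rightarrow> 'x"
    and f :: "(nat \<Rightarrow> 'x) \<Rightarrow> 'u set" and \<phi> :: "nat \<Rightarrow> 'x \<Rightarrow> 'u set"
    and p :: "(nat \<Rightarrow> 'u set) \<Rightarrow> 'u set"
  assumes Y: "set_lattice U Y"
    and X: "\<forall>k\<in>{1..n}. zero k \<in> X k \<and> one k \<in> X k \<and> zero k \<noteq> one k"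
    and f_into: "\<forall>x\<in>tuples n X. f x \<in> Y"
    and BC: "\<forall>k\<in>{1..n}. \<forall>x\<in>tuples n X.
               f (x(k := zero k)) \<subseteq> f x \<and> f x \<subseteq> f (x(k := one k))"
    and Phi_le: "\<forall>k\<in>{1..n}. \<forall>a\<in>X k.
               Phi_minus U Y n X zero f k a \<subseteq> Phi_plus U Y n X one f k a"
    and phi_into: "\<forall>k\<in>{1..n}. \<forall>a\<in>X k. \<phi> k a \<in> Y"
    and phi_bd: "\<forall>k\<in>{1..n}. \<forall>a\<in>X k. \<phi> k (zero k) \<subseteq> \<phi> k a \<and> \<phi> k a \<subseteq> \<phi> k (one k)"
    and phi_between: "\<forall>k\<in>{1..n}. \<forall>a\<in>X k.
               Phi_minus U Y n X zero f k a \<subseteq> \<phi> k a \<and> \<phi> k a \<subseteq> Phi_plus U Y n X one f k a"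
    and p: "polyfun Y n p"
  shows "(\<forall>x\<in>tuples n X. f x = p (\<lambda>i\<in>{1..n}. \<phi> i (x i)))
     \<longleftrightarrow> (\<forall>I\<subseteq>{1..n}.
            p (\<lambda>i\<in>{1..n}. if i \<in> I then \<phi> i (one i) else \<phi> i (zero i))
              = f (hat1 n zero one I))"
proof -
  define F where "F x = (\<lambda>i\<in>{1..n}. \<phi> i (x i))" for x
  have F_hat1: "F (hat1 n zero one I) = (\<lambda>i\<in>{1..n}. if i \<in> I then \<phi> i (one i) else \<phi> i (zero i))"
    for I unfolding F_def hat1_def by (rule ext) auto
  have hat1_tuple: "hat1 n zero one I \<in> tuples n X" for I
    using X unfolding hat1_def by auto
  have f_U: "\<forall>x\<in>tuples n X. f x \<subseteq> U" using Y f_into unfolding set_lattice_def by blast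
  define m where "m k a u v = u \<union> (\<phi> k a \<inter> v)" for k a and u v :: "'u set"
  have f_rec: "f x = m k (x k) (f (x(k := zero k))) (f (x(k := one k)))"
    if x: "x \<in> tuples n X" and k: "k \<in> {1..n}" for x k
    unfolding m_def using X BC phi_between x k PiE_mem[OF x k]
    by (intro f_median[where Y = Y, OF x k _ f_U]) auto
  have p_rec: "p (F x) = m k (x k) (p (F (x(k := zero k)))) (p (F (x(k := one k))))"
    if x: "x \<in> tuples n X" and k: "k \<in> {1..n}" for x k
    unfolding m_def F_def using X phi_into phi_bd k by (intro polyfun_comp_median[OF p x k]) auto
  have "(\<forall>x\<in>tuples n X. f x = p (F x)) \<longleftrightarrow> (\<forall>I\<subseteq>{1..n}. p (F (hat1 n zero one I)) = f (hat1 n zero one I))"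
  proof
    assume "\<forall>x\<in>tuples n X. f x = p (F x)"
    then show "\<forall>I\<subseteq>{1..n}. p (F (hat1 n zero one I)) = f (hat1 n zero one I)"
      using hat1_tuple by simp
  next
    assume boolean: "\<forall>I\<subseteq>{1..n}. p (F (hat1 n zero one I)) = f (hat1 n zero one I)"
    have bounds: "\<forall>k\<in>{1..n}. zero k \<in> X k \<and> one k \<in> X k" using X by blast
    show "\<forall>x\<in>tuples n X. f x = p (F x)"
    proof
      fix x assume x: "x \<in> tuples n X"
      show "f x = p (F x)"
        by (rule median_recursion_unique[where m = m, OF bounds f_rec p_rec _ x]) (use boolean in auto)
    qed
  qed
  then show ?thesis unfolding F_hat1 unfolding F_def .
qed

end
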